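(* Let $m \geq 1$ be an integer and let $q \in (m, m+1)$ be a Pisot number. Then $q$ has no non-real Galois conjugate $q'$ with $|q'| < \frac{1}{m+1/2}$, and $q$ has at most one real Galois conjugate $q'$ with $|q'| < \frac{1}{m+1/2}$.
   Context: A Pisot number is a real algebraic integer $q>1$ all of whose other Galois conjugates have absolute value strictly less than $1$. *)

theory Defs
  imports "HOL-Computational_Algebra.Computational_Algebra" "HOL-Analysis.Analysis"
begin

definition algebraic_integer :: "real \<Rightarrow> bool" where
  "algebraic_integer x \<longleftrightarrow>
     (\<exists>p :: int poly. lead_coeff p = 1 \<and> poly (map_poly of_int p) x = 0)"

text \<open>Galois conjugates of a real algebraic number q (other than q itself): the complex roots,
  different from q, of an irreducible integer polynomial having q as a root
  (such a polynomial is the minimal polynomial up to a sign).\<close>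
definition galois_conjugates :: "real \<Rightarrow> complex set" where
  "galois_conjugates q =
     {z. \<exists>p :: int poly. irreducible p \<and> poly (map_poly of_int p) (complex_of_real q) = 0
            \<and> poly (map_poly of_int p) z = 0} - {complex_of_real q}"

definition pisot :: "real \<Rightarrow> bool" where
  "pisot q \<longleftrightarrow> q > 1 \<and> algebraic_integer q \<and> (\<forall>z \<in> galois_conjugates q. cmod z < 1)"

end

theory Submission
  imports Defs
begin

(* Let M be a primitive integer polynomial of least degree with M(q) = 0. It is irreducible,
   every Galois conjugate of q is a root of M, and q is a simple root. Since q is an algebraic
   integer, M has leading coefficient +-1, and its constant term is a nonzero integer; hence
   1 <= |M(0)| = q * (product of the moduli of the other roots). All other roots lie in the unit
   disc, so any two distinct conjugates a, b satisfy q |a| |b| >= 1. But if |a|, |b| < 1/(m + 1/2)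
   and q < m + 1, then q |a| |b| < (m + 1)/(m + 1/2)^2 <= 1. A non-real conjugate z would give
   such a pair z, cnj z, and two distinct real ones would too. *)

abbreviation ipoly :: "int poly \<Rightarrow> 'a::comm_ring_1 \<Rightarrow> 'a" where
  "ipoly p x \<equiv> poly (map_poly of_int p) x"

lemma map_poly_of_int_diff [simp]:
  "map_poly (of_int :: int \<Rightarrow> 'a::comm_ring_1) (p - q) = map_poly of_int p - map_poly of_int q"
  by (intro poly_eqI) (simp add: coeff_map_poly)

lemma map_poly_of_int_mult [simp]:
  "map_poly (of_int :: int \<Rightarrow> 'a::comm_ring_1) (p * q) = map_poly of_int p * map_poly of_int q"
  by (intro poly_eqI) (simp add: coeff_map_poly coeff_mult)

lemma map_poly_of_int_smult [simp]:
  "map_poly (of_int :: int \<Rightarrow> 'a::comm_ring_1) (smult c p) = smult (of_int c) (map_poly of_int p)"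
  by (simp add: map_poly_smult)

lemma map_poly_of_int_eq_0_iff [simp]:
  "map_poly (of_int :: int \<Rightarrow> 'a::{comm_ring_1,ring_char_0}) p = 0 \<longleftrightarrow> p = 0"
  by (simp add: poly_eq_iff coeff_map_poly)

lemma lead_coeff_map_poly_of_int [simp]:
  "lead_coeff (map_poly (of_int :: int \<Rightarrow> 'a::{comm_ring_1,ring_char_0}) p) = of_int (lead_coeff p)"
  by (cases "p = 0") (simp_all add: lead_coeff_map_poly_nz)

lemma map_poly_of_int_pderiv:
  "map_poly (of_int :: int \<Rightarrow> 'a::idom) (pderiv p) = pderiv (map_poly of_int p)"
  by (intro poly_eqI) (simp add: coeff_map_poly coeff_pderiv)

lemma ipoly_of_real:
  "ipoly p (of_real x :: 'a::{real_algebra_1,comm_ring_1}) = of_real (ipoly p x)"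
  by (simp add: poly_altdef degree_map_poly coeff_map_poly)

definition is_min_int_poly :: "int poly \<Rightarrow> 'a::comm_ring_1 \<Rightarrow> bool" where
  "is_min_int_poly M x \<longleftrightarrow> M \<noteq> 0 \<and> ipoly M x = 0 \<and> Polynomial.content M = 1 \<and>
     (\<forall>G. G \<noteq> 0 \<longrightarrow> ipoly G x = 0 \<longrightarrow> degree M \<le> degree G)"

lemma min_int_poly_exists:
  fixes x :: "'a::{idom,ring_char_0}"
  assumes "F \<noteq> 0" and "ipoly F x = 0"
  obtains M where "is_min_int_poly M x"
proof -
  obtain F0 where F0: "F0 \<noteq> 0" "ipoly F0 x = 0"
    and least: "\<And>G. G \<noteq> 0 \<Longrightarrow> ipoly G x = 0 \<Longrightarrow> degree F0 \<le> degree G"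
    using ex_has_least_nat[of "\<lambda>G. G \<noteq> 0 \<and> ipoly G x = 0" F degree] assms by blast
  have "ipoly F0 x = ipoly (smult (Polynomial.content F0) (primitive_part F0)) x"
    by simp
  also have "\<dots> = of_int (Polynomial.content F0) * ipoly (primitive_part F0) x"
    by (simp only: map_poly_of_int_smult poly_smult)
  finally have "ipoly F0 x = of_int (Polynomial.content F0) * ipoly (primitive_part F0) x" .
  with F0 have "ipoly (primitive_part F0) x = 0"
    by simp
  with F0 least show ?thesis
    by (intro that[of "primitive_part F0"]) (simp add: is_min_int_poly_def)
qed

lemma min_int_poly_dvd:
  fixes x :: "'a::{idom,ring_char_0}"
  assumes M: "is_min_int_poly M x" and F: "ipoly F x = 0"
  shows "M dvd F"
proof -
  define r where "r = pseudo_mod F M"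
  have "M \<noteq> 0" "Polynomial.content M = 1"
    using M by (simp_all add: is_min_int_poly_def)
  then obtain a s where "a \<noteq> 0" and as: "smult a F = M * s + r"
    using pseudo_mod(1) r_def by blast
  then have "r = smult a F - M * s"
    by simp
  with F M have "ipoly r x = 0"
    by (simp add: is_min_int_poly_def)
  with M have "r = 0"
    using pseudo_mod(2)[OF \<open>M \<noteq> 0\<close>, of F] r_def by (force simp: is_min_int_poly_def)
  with as have "fract_poly M dvd smult (to_fract a) (fract_poly F)"
    by (metis add_0_right dvd_triv_left fract_poly_mult fract_poly_smult)
  with \<open>a \<noteq> 0\<close> have "fract_poly M dvd fract_poly F"
    by (simp add: dvd_smult_cancel)
  then show ?thesis
    using \<open>Polynomial.content M = 1\<close> by (rule fract_poly_dvdD)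
qed

lemma min_int_poly_degree_pos:
  fixes x :: "'a::{idom,ring_char_0}"
  assumes "is_min_int_poly M x"
  shows "degree M > 0"
proof (rule ccontr)
  assume "\<not> degree M > 0"
  then obtain c where "M = [:c:]"
    using degree_eq_zeroE by blast
  with assms show False
    by (auto simp: is_min_int_poly_def map_poly_pCons)
qed

lemma min_int_poly_irreducible:
  fixes x :: "'a::{idom,ring_char_0}"
  assumes M: "is_min_int_poly M x"
  shows "irreducible M"
proof (rule irreducibleI)
  show "M \<noteq> 0" "\<not> is_unit M"
    using M min_int_poly_degree_pos[OF M] by (auto simp: is_min_int_poly_def is_unit_poly_iff)
  have cofactor_unit: "is_unit b" if ab: "M = a * b" and a: "ipoly a x = 0" for a b
  proof -
    have "a \<noteq> 0" "b \<noteq> 0"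
      using ab \<open>M \<noteq> 0\<close> by auto
    moreover from M a \<open>a \<noteq> 0\<close> have "degree M \<le> degree a"
      by (simp add: is_min_int_poly_def)
    ultimately have "degree b = 0"
      using ab by (simp add: degree_mult_eq)
    then obtain c where c: "b = [:c:]"
      using degree_eq_zeroE by blast
    with M ab have "Polynomial.content a * normalize c = 1"
      by (simp add: is_min_int_poly_def content_mult mult.commute)
    then have "c dvd 1"
      by (metis dvd_triv_right normalize_dvd_iff)
    with c show ?thesis
      by (simp add: is_unit_poly_iff)
  qed
  fix a b assume ab: "M = a * b"
  with M have "ipoly a x = 0 \<or> ipoly b x = 0"
    by (simp add: is_min_int_poly_def)
  then show "is_unit a \<or> is_unit b"
    using cofactor_unit[OF ab] cofactor_unit[of b a] ab by (auto simp: mult.commute)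
qed

lemma min_int_poly_simple_root:
  fixes x :: "'a::{idom,ring_char_0}"
  assumes M: "is_min_int_poly M x"
  shows "poly (pderiv (map_poly of_int M)) x \<noteq> 0"
proof
  assume "poly (pderiv (map_poly of_int M)) x = 0"
  then have "ipoly (pderiv M) x = 0"
    by (simp add: map_poly_of_int_pderiv)
  moreover have "pderiv M \<noteq> 0"
    using min_int_poly_degree_pos[OF M] by (simp add: pderiv_eq_0_iff)
  ultimately have "degree M \<le> degree (pderiv M)"
    using M by (simp add: is_min_int_poly_def)
  with min_int_poly_degree_pos[OF M] show False
    by (simp add: degree_pderiv)
qed

lemma min_int_poly_coeff_0:
  fixes x :: "'a::{idom,ring_char_0}"
  assumes M: "is_min_int_poly M x" and "x \<noteq> 0"
  shows "coeff M 0 \<noteq> 0"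
proof
  assume "coeff M 0 = 0"
  then obtain M' where M': "M = pCons 0 M'"
    by (metis coeff_pCons_0 pCons_cases)
  with M have "M' \<noteq> 0"
    by (auto simp: is_min_int_poly_def)
  moreover from M M' \<open>x \<noteq> 0\<close> have "ipoly M' x = 0"
    by (simp add: is_min_int_poly_def map_poly_pCons)
  ultimately have "degree M \<le> degree M'"
    using M by (simp add: is_min_int_poly_def)
  with M' \<open>M' \<noteq> 0\<close> show False
    by simp
qed

lemma min_int_poly_lead_coeff:
  fixes x :: "'a::{idom,ring_char_0}"
  assumes M: "is_min_int_poly M x" and Q: "lead_coeff Q = 1" "ipoly Q x = 0"
  shows "\<bar>lead_coeff M\<bar> = 1"
proof -
  obtain v where "Q = M * v"
    using min_int_poly_dvd[OF M Q(2)] by (elim dvdE)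
  with Q(1) have "lead_coeff M * lead_coeff v = 1"
    by (simp add: lead_coeff_mult)
  then show ?thesis
    by (auto simp: zmult_eq_1_iff)
qed

lemma galois_conjugates_min_int_poly:
  assumes M: "is_min_int_poly M (complex_of_real q)"
  shows "galois_conjugates q = {z. ipoly M z = 0} - {complex_of_real q}"
proof -
  have "ipoly M z = 0"
    if P: "irreducible P" "ipoly P (complex_of_real q) = 0" "ipoly P z = 0" for P and z :: complex
  proof -
    obtain w where w: "P = M * w"
      using min_int_poly_dvd[OF M P(2)] by (elim dvdE)
    have "\<not> is_unit M"
      using min_int_poly_irreducible[OF M] by (simp add: irreducible_def)
    with P(1) w have "is_unit w"
      by (auto dest: irreducibleD)
    then obtain c where "w = [:c:]" "c \<noteq> 0"
      by (auto simp: is_unit_poly_iff)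
    with P(3) w show ?thesis
      by simp
  qed
  moreover have "ipoly M (complex_of_real q) = 0"
    using M by (simp add: is_min_int_poly_def)
  ultimately show ?thesis
    unfolding galois_conjugates_def using min_int_poly_irreducible[OF M] by blast
qed

lemma galois_conjugates_cnj:
  assumes "z \<in> galois_conjugates q"
  shows "cnj z \<in> galois_conjugates q"
proof -
  have "cnj z \<noteq> complex_of_real q"
    using assms by (auto simp: galois_conjugates_def complex_eq_iff)
  with assms show ?thesis
    unfolding galois_conjugates_def
    by (auto simp: real_poly_cnj_root_iff coeff_map_poly)
qed

lemma norm_poly_0_le_lead_coeff:
  fixes R :: "complex poly"
  assumes "R \<noteq> 0" and "\<And>w. poly R w = 0 \<Longrightarrow> cmod w \<le> 1"
  shows "cmod (poly R 0) \<le> cmod (lead_coeff R)"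
  using assms
proof (induction "degree R" arbitrary: R)
  case 0
  then obtain c where "R = [:c:]"
    using degree_eq_zeroE by metis
  then show ?case
    by simp
next
  case (Suc n)
  then have "\<not> constant (poly R)"
    by (simp add: constant_degree)
  then obtain w where w: "poly R w = 0"
    using fundamental_theorem_of_algebra by blast
  then obtain R' where R': "R = [:-w, 1:] * R'"
    by (metis dvdE poly_eq_0_iff_dvd)
  with Suc.prems have "R' \<noteq> 0"
    by auto
  then have "degree R = Suc (degree R')"
    unfolding R' by (subst degree_mult_eq) auto
  with Suc.hyps(2) have "degree R' = n"
    by simp
  moreover have "\<And>v. poly R' v = 0 \<Longrightarrow> cmod v \<le> 1"
    using Suc.prems(2) R' by simp
  ultimately have IH: "cmod (poly R' 0) \<le> cmod (lead_coeff R')"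
    using Suc.hyps(1) \<open>R' \<noteq> 0\<close> by blast
  have "cmod (poly R 0) = cmod w * cmod (poly R' 0)"
    using R' by (simp add: norm_mult)
  also have "\<dots> \<le> cmod (poly R' 0)"
    using Suc.prems(2)[OF w] by (simp add: mult_left_le_one_le)
  also have "\<dots> \<le> cmod (lead_coeff R)"
    using IH unfolding R' lead_coeff_mult by simp
  finally show ?case .
qed

lemma norm_poly_0_le_three_roots:
  fixes P :: "complex poly"
  assumes "P \<noteq> 0"
    and x: "poly P x = 0" "poly (pderiv P) x \<noteq> 0"
    and ab: "poly P a = 0" "poly P b = 0" "a \<noteq> x" "b \<noteq> x" "a \<noteq> b"
    and roots: "\<And>w. poly P w = 0 \<Longrightarrow> w \<noteq> x \<Longrightarrow> cmod w \<le> 1"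
  shows "cmod (poly P 0) \<le> cmod (lead_coeff P) * cmod x * cmod a * cmod b"
proof -
  obtain S where S: "P = [:-x, 1:] * S"
    using x(1) by (metis dvdE poly_eq_0_iff_dvd)
  have "pderiv [:-x, 1:] = 1"
    by (simp add: pderiv_pCons)
  then have "pderiv P = [:-x, 1:] * pderiv S + S"
    by (simp only: S pderiv_mult mult_1_left mult_1_right)
  with x(2) have Sx: "poly S x \<noteq> 0"
    by simp
  from S ab have "poly S a = 0"
    by simp
  then obtain S' where S': "S = [:-a, 1:] * S'"
    by (metis dvdE poly_eq_0_iff_dvd)
  from S S' ab have "poly S' b = 0"
    by simp
  then obtain R where R: "S' = [:-b, 1:] * R"
    by (metis dvdE poly_eq_0_iff_dvd)
  have P: "P = [:-x, 1:] * ([:-a, 1:] * ([:-b, 1:] * R))"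
    using S S' R by simp
  have "cmod (poly R 0) \<le> cmod (lead_coeff R)"
  proof (rule norm_poly_0_le_lead_coeff)
    show "R \<noteq> 0"
      using \<open>P \<noteq> 0\<close> P by auto
    show "cmod w \<le> 1" if "poly R w = 0" for w
    proof (rule roots)
      show "poly P w = 0"
        using P that by simp
      show "w \<noteq> x"
        using Sx S' R that by auto
    qed
  qed
  moreover have "cmod (poly P 0) = cmod x * cmod a * cmod b * cmod (poly R 0)"
    using P by (simp add: norm_mult)
  moreover have "lead_coeff R = lead_coeff P"
    unfolding P lead_coeff_mult by simp
  ultimately show ?thesis
    by (simp add: mult_left_mono mult.commute mult.left_commute)
qed

lemma pisot_conjugates_norm_product_ge_1:
  assumes "pisot q" and ab: "a \<in> galois_conjugates q" "b \<in> galois_conjugates q" "a \<noteq> b"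
  shows "1 \<le> q * cmod a * cmod b"
proof -
  have "q > 0" and "algebraic_integer q" and conj_lt_1: "\<And>z. z \<in> galois_conjugates q \<Longrightarrow> cmod z < 1"
    using assms(1) by (simp_all add: pisot_def)
  then obtain Q where Q: "lead_coeff Q = 1" "ipoly Q (complex_of_real q) = 0"
    unfolding algebraic_integer_def by (auto simp: ipoly_of_real)
  then have "Q \<noteq> 0"
    by auto
  with Q obtain M where M: "is_min_int_poly M (complex_of_real q)"
    using min_int_poly_exists by blast
  have conj: "galois_conjugates q = {z. ipoly M z = 0} - {complex_of_real q}"
    using M by (rule galois_conjugates_min_int_poly)
  define P :: "complex poly" where "P = map_poly of_int M"
  have "cmod (poly P 0) \<le> cmod (lead_coeff P) * cmod (complex_of_real q) * cmod a * cmod b"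
  proof (rule norm_poly_0_le_three_roots)
    show "P \<noteq> 0" "poly P (complex_of_real q) = 0"
      using M by (simp_all add: P_def is_min_int_poly_def)
    show "poly (pderiv P) (complex_of_real q) \<noteq> 0"
      using min_int_poly_simple_root[OF M] by (simp add: P_def)
    show "poly P a = 0" "poly P b = 0" "a \<noteq> complex_of_real q" "b \<noteq> complex_of_real q" "a \<noteq> b"
      using ab by (simp_all add: P_def conj)
    show "cmod w \<le> 1" if "poly P w = 0" "w \<noteq> complex_of_real q" for w
      using conj_lt_1[of w] that by (simp add: P_def conj)
  qed
  moreover have "cmod (lead_coeff P) = 1"
    using min_int_poly_lead_coeff[OF M Q] by (simp add: P_def)
  moreover have "1 \<le> cmod (poly P 0)"
  proof -
    have "coeff M 0 \<noteq> 0"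
      using min_int_poly_coeff_0[OF M] \<open>q > 0\<close> by simp
    then have "1 \<le> \<bar>coeff M 0\<bar>"
      by linarith
    then show ?thesis
      by (simp add: P_def poly_0_coeff_0 coeff_map_poly)
  qed
  ultimately show ?thesis
    using \<open>q > 0\<close> by (simp add: mult.assoc)
qed

lemma mult_small_moduli_lt_1:
  fixes m :: nat and q A B :: real
  assumes "m \<ge> 1" "q < real m + 1" "0 \<le> A" "A < 1 / (real m + 1/2)" "0 \<le> B" "B < 1 / (real m + 1/2)"
  shows "q * A * B < 1"
proof -
  define t where "t = real m + 1/2"
  have "t > 0"
    by (simp add: t_def)
  have "1 * 1 \<le> real m * real m"
    using assms(1) by (intro mult_mono) simp_all
  then have "real m + 1 \<le> t * t"
    by (simp add: t_def algebra_simps)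
  have "q * A * B \<le> (real m + 1) * (A * B)"
    using assms by (simp add: mult.assoc mult_right_mono)
  also have "\<dots> < (real m + 1) * (1 / t * (1 / t))"
    using assms \<open>t > 0\<close> by (intro mult_strict_left_mono mult_strict_mono) (simp_all add: t_def)
  also have "\<dots> \<le> 1"
    using \<open>real m + 1 \<le> t * t\<close> \<open>t > 0\<close> by (simp add: field_simps)
  finally show ?thesis .
qed

theorem theorem2p1:
  fixes m :: nat and q :: real
  assumes "m \<ge> 1" and "real m < q" and "q < real m + 1" and "pisot q"
  shows "\<not> (\<exists>z \<in> galois_conjugates q. Im z \<noteq> 0 \<and> cmod z < 1 / (real m + 1/2))
       \<and> card {z \<in> galois_conjugates q. Im z = 0 \<and> cmod z < 1 / (real m + 1/2)} \<le> 1"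
proof -
  let ?small = "\<lambda>z. cmod z < 1 / (real m + 1/2)"
  have no_small_pair: "a = b"
    if "a \<in> galois_conjugates q" "b \<in> galois_conjugates q" "?small a" "?small b" for a b
  proof (rule ccontr)
    assume "a \<noteq> b"
    with that assms(4) have "1 \<le> q * cmod a * cmod b"
      by (intro pisot_conjugates_norm_product_ge_1)
    moreover have "q * cmod a * cmod b < 1"
      using that assms(1,3) by (intro mult_small_moduli_lt_1) simp_all
    ultimately show False
      by simp
  qed
  have "\<not> (\<exists>z \<in> galois_conjugates q. Im z \<noteq> 0 \<and> ?small z)"
  proof
    assume "\<exists>z \<in> galois_conjugates q. Im z \<noteq> 0 \<and> ?small z"
    then obtain z where z: "z \<in> galois_conjugates q" "Im z \<noteq> 0" "?small z"
      by blast
    then have "cnj z = z"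
      using no_small_pair[of z "cnj z"] galois_conjugates_cnj by simp
    with z(2) show False
      by (simp add: complex_eq_iff)
  qed
  moreover have "card {z \<in> galois_conjugates q. Im z = 0 \<and> ?small z} \<le> 1"
    using no_small_pair by (cases "finite {z \<in> galois_conjugates q. Im z = 0 \<and> ?small z}")
      (auto simp: card_le_Suc0_iff_eq)
  ultimately show ?thesis
    by blast
qed

end
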